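(* There is an absolute constant $C>0$ such that the following holds. Let $\varepsilon>0$, let $f:\mathbb R\to\mathbb R$ be $1$-smooth, and let $x_-<x_+$ satisfy $f'(x_-)\le-\varepsilon$ and $0\le f(x_-)-f(x_+)\le\frac{\varepsilon}{4}(x_+-x_-)$. Then BinarySearchII$(x_-,x_+)$ terminates and outputs an $\varepsilon$-stationary point of $f$ using at most $C\bigl(1+\max\{0,\log\frac{x_+-x_-}{\varepsilon}\}\bigr)$ oracle queries.
   Context: $f:\mathbb R\to\mathbb R$ is $1$-smooth if it is continuously differentiable and $f'$ is $1$-Lipschitz; $x$ is an $\varepsilon$-stationary point if $|f'(x)|<\varepsilon$. The oracle returns $(f(x),f'(x))$ on query $x$; values at already-queried points (including $x_\pm$) are reused. Subroutines (a recursive call's output is returned unchanged): BinarySearch$(x_0,x_1)$: $m=(x_0+x_1)/2$; if $|f'(m)|<\varepsilon$ return $m$; if $f'(m)\le-\varepsilon$ return BinarySearch$(m,x_1)$; if $f'(m)>0$ return BinarySearch$(x_0,m)$. BinarySearchIII$(x_-,x_+)$: $m=(x_-+x_+)/2$; if $|f'(m)|<\varepsilon$ return $m$; else if $f'(m)>0$ return BinarySearch$(x_-,m)$; else if $f(m)\ge f(x_-)$ return BinarySearchIII$(x_-,m)$; else return BinarySearchIII$(m,x_+)$. BinarySearchII$(x_-,x_+)$: $m=(x_-+x_+)/2$; if $|f'(m)|<\varepsilon$ return $m$; else if $f'(m)>0$ return BinarySearch$(x_-,m)$; else if $f(m)\ge f(x_-)$ return BinarySearchIII$(x_-,m)$;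 else if $f(m)\le f(x_+)$ return BinarySearchIII$(m,x_+)$; else if $f(x_-)-f(m)\le\frac12(f(x_-)-f(x_+))$ return BinarySearchII$(x_-,m)$; else return BinarySearchII$(m,x_+)$. *)

theory Defs
  imports Complex_Main
begin

definition one_smooth :: "(real \<Rightarrow> real) \<Rightarrow> (real \<Rightarrow> real) \<Rightarrow> bool" where
  "one_smooth f f' \<longleftrightarrow> (\<forall>x. (f has_real_derivative f' x) (at x))
     \<and> continuous_on UNIV f' \<and> (\<forall>x y. \<bar>f' x - f' y\<bar> \<le> \<bar>x - y\<bar>)"

text \<open>A derivation of
  bsearch f f' eps a b out q  means: the call BinarySearch(a,b) terminates,
  returns out, and makes q oracle queries in total (one new query at each
  midpoint; values at the endpoints are reused).  The algorithms are
  deterministic, so such a derivation exists iff the call terminates.\<close>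
inductive bsearch :: "(real \<Rightarrow> real) \<Rightarrow> (real \<Rightarrow> real) \<Rightarrow> real \<Rightarrow> real \<Rightarrow> real \<Rightarrow> real \<Rightarrow> nat \<Rightarrow> bool"
  for f f' :: "real \<Rightarrow> real" and eps :: real where
  bs_stop: "\<bar>f' ((a + b) / 2)\<bar> < eps \<Longrightarrow> bsearch f f' eps a b ((a + b) / 2) 1"
| bs_right: "\<not> \<bar>f' ((a + b) / 2)\<bar> < eps \<Longrightarrow> f' ((a + b) / 2) \<le> - eps \<Longrightarrow>
     bsearch f f' eps ((a + b) / 2) b out q \<Longrightarrow> bsearch f f' eps a b out (Suc q)"
| bs_left: "\<not> \<bar>f' ((a + b) / 2)\<bar> < eps \<Longrightarrow> \<not> f' ((a + b) / 2) \<le> - eps \<Longrightarrow>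
     f' ((a + b) / 2) > 0 \<Longrightarrow>
     bsearch f f' eps a ((a + b) / 2) out q \<Longrightarrow> bsearch f f' eps a b out (Suc q)"

inductive bsearch3 :: "(real \<Rightarrow> real) \<Rightarrow> (real \<Rightarrow> real) \<Rightarrow> real \<Rightarrow> real \<Rightarrow> real \<Rightarrow> real \<Rightarrow> nat \<Rightarrow> bool"
  for f f' :: "real \<Rightarrow> real" and eps :: real where
  bs3_stop: "\<bar>f' ((a + b) / 2)\<bar> < eps \<Longrightarrow> bsearch3 f f' eps a b ((a + b) / 2) 1"
| bs3_pos: "\<not> \<bar>f' ((a + b) / 2)\<bar> < eps \<Longrightarrow> f' ((a + b) / 2) > 0 \<Longrightarrow>
     bsearch f f' eps a ((a + b) / 2) out q \<Longrightarrow> bsearch3 f f' eps a b out (Suc q)"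
| bs3_left: "\<not> \<bar>f' ((a + b) / 2)\<bar> < eps \<Longrightarrow> \<not> f' ((a + b) / 2) > 0 \<Longrightarrow>
     f ((a + b) / 2) \<ge> f a \<Longrightarrow>
     bsearch3 f f' eps a ((a + b) / 2) out q \<Longrightarrow> bsearch3 f f' eps a b out (Suc q)"
| bs3_right: "\<not> \<bar>f' ((a + b) / 2)\<bar> < eps \<Longrightarrow> \<not> f' ((a + b) / 2) > 0 \<Longrightarrow>
     \<not> f ((a + b) / 2) \<ge> f a \<Longrightarrow>
     bsearch3 f f' eps ((a + b) / 2) b out q \<Longrightarrow> bsearch3 f f' eps a b out (Suc q)"

inductive bsearch2 :: "(real \<Rightarrow> real) \<Rightarrow> (real \<Rightarrow> real) \<Rightarrow> real \<Rightarrow> real \<Rightarrow> real \<Rightarrow> real \<Rightarrow> nat \<Rightarrow> bool"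
  for f f' :: "real \<Rightarrow> real" and eps :: real where
  bs2_stop: "\<bar>f' ((a + b) / 2)\<bar> < eps \<Longrightarrow> bsearch2 f f' eps a b ((a + b) / 2) 1"
| bs2_pos: "\<not> \<bar>f' ((a + b) / 2)\<bar> < eps \<Longrightarrow> f' ((a + b) / 2) > 0 \<Longrightarrow>
     bsearch f f' eps a ((a + b) / 2) out q \<Longrightarrow> bsearch2 f f' eps a b out (Suc q)"
| bs2_geq: "\<not> \<bar>f' ((a + b) / 2)\<bar> < eps \<Longrightarrow> \<not> f' ((a + b) / 2) > 0 \<Longrightarrow>
     f ((a + b) / 2) \<ge> f a \<Longrightarrow>
     bsearch3 f f' eps a ((a + b) / 2) out q \<Longrightarrow> bsearch2 f f' eps a b out (Suc q)"
| bs2_leq: "\<not> \<bar>f' ((a + b) / 2)\<bar> < eps \<Longrightarrow> \<not> f' ((a + b) / 2) > 0 \<Longrightarrow>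
     \<not> f ((a + b) / 2) \<ge> f a \<Longrightarrow> f ((a + b) / 2) \<le> f b \<Longrightarrow>
     bsearch3 f f' eps ((a + b) / 2) b out q \<Longrightarrow> bsearch2 f f' eps a b out (Suc q)"
| bs2_left: "\<not> \<bar>f' ((a + b) / 2)\<bar> < eps \<Longrightarrow> \<not> f' ((a + b) / 2) > 0 \<Longrightarrow>
     \<not> f ((a + b) / 2) \<ge> f a \<Longrightarrow> \<not> f ((a + b) / 2) \<le> f b \<Longrightarrow>
     f a - f ((a + b) / 2) \<le> (f a - f b) / 2 \<Longrightarrow>
     bsearch2 f f' eps a ((a + b) / 2) out q \<Longrightarrow> bsearch2 f f' eps a b out (Suc q)"
| bs2_right: "\<not> \<bar>f' ((a + b) / 2)\<bar> < eps \<Longrightarrow> \<not> f' ((a + b) / 2) > 0 \<Longrightarrow>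
     \<not> f ((a + b) / 2) \<ge> f a \<Longrightarrow> \<not> f ((a + b) / 2) \<le> f b \<Longrightarrow>
     \<not> f a - f ((a + b) / 2) \<le> (f a - f b) / 2 \<Longrightarrow>
     bsearch2 f f' eps ((a + b) / 2) b out q \<Longrightarrow> bsearch2 f f' eps a b out (Suc q)"

end

theory Submission
  imports Defs
begin

text \<open>Each subroutine maintains an invariant on its current interval [a,b] which, by
  1-smoothness, forces b - a to be at least a constant multiple of eps: for BinarySearch
  f'(a) \<le> -eps \<le> eps \<le> f'(b), for BinarySearchIII f'(a) \<le> -eps and f(a) \<le> f(b), for
  BinarySearchII f'(a) \<le> -eps and 0 \<le> f(a) - f(b) \<le> eps/4 (b - a).  Every step either
  stops or halves the interval while passing to a call whose invariant holds, so a call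
  on an interval of length below 2^n eps stops after at most n queries.\<close>

lemma one_smooth_lipschitz: "one_smooth f f' \<Longrightarrow> \<bar>f' x - f' y\<bar> \<le> \<bar>x - y\<bar>"
  unfolding one_smooth_def by blast

lemma one_smooth_descent:
  assumes S: "one_smooth f f'" and "a \<le> b" and fa: "f' a \<le> - eps"
  shows "f b - f a \<le> - eps * (b - a) + (b - a)^2 / 2"
proof -
  define g where "g x = f x + eps * x - (x - a)^2 / 2" for x
  have f_deriv: "\<And>x. (f has_real_derivative f' x) (at x)"
    using S unfolding one_smooth_def by blast
  have "g b \<le> g a"
  proof (rule DERIV_nonpos_imp_nonincreasing[OF \<open>a \<le> b\<close>])
    fix x assume x: "a \<le> x" "x \<le> b"
    have "(g has_real_derivative (f' x + eps - (x - a))) (at x)"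
      unfolding g_def
      by (rule derivative_eq_intros f_deriv refl | simp add: power2_eq_square field_simps)+
    moreover have "f' x + eps - (x - a) \<le> 0"
      using one_smooth_lipschitz[OF S, of x a] x fa by auto
    ultimately show "\<exists>y. (g has_real_derivative y) (at x) \<and> y \<le> 0" by blast
  qed
  then show ?thesis unfolding g_def by (simp add: algebra_simps)
qed

lemma one_smooth_descent_length:
  assumes S: "one_smooth f f'" and "a < b" and "f' a \<le> - eps"
    and drop: "f a - f b \<le> c * (b - a)"
  shows "2 * (eps - c) \<le> b - a"
proof -
  have "(b - a) * (2 * (eps - c)) = 2 * (eps * (b - a) - c * (b - a))"
    by (simp add: algebra_simps)
  also have "\<dots> \<le> (b - a)^2"
    using one_smooth_descent[OF S _ \<open>f' a \<le> - eps\<close>, of b] \<open>a < b\<close> drop by simp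
  finally show ?thesis
    using \<open>a < b\<close> by (simp add: power2_eq_square)
qed

lemma midpoint_halves:
  fixes a b :: real
  assumes "a < b" "b - a < 2 ^ Suc n * eps"
  shows "a < (a + b) / 2" "(a + b) / 2 < b"
    "(a + b) / 2 - a < 2 ^ n * eps" "b - (a + b) / 2 < 2 ^ n * eps"
  using assms by (auto simp: field_simps)

lemma bsearch_within:
  assumes S: "one_smooth f f'" and "eps > 0" and "a < b" and "f' a \<le> - eps" and "eps \<le> f' b"
    and "b - a < 2 ^ n * eps"
  shows "\<exists>out q. bsearch f f' eps a b out q \<and> \<bar>f' out\<bar> < eps \<and> q \<le> n"
  using assms(3-)
proof (induction n arbitrary: a b)
  case 0
  then show ?case using one_smooth_lipschitz[OF S, of b a] \<open>eps > 0\<close> by simp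
next
  case (Suc n)
  define m where "m = (a + b) / 2"
  note mid = midpoint_halves[OF Suc.prems(1,4), folded m_def]
  consider "\<bar>f' m\<bar> < eps" | "f' m \<le> - eps" | "eps \<le> f' m" by linarith
  then show ?case
  proof cases
    case 1
    then show ?thesis using bs_stop[of f' a b eps f] by (auto simp: m_def)
  next
    case 2
    then obtain out q where "bsearch f f' eps m b out q" "\<bar>f' out\<bar> < eps" "q \<le> n"
      using Suc.IH[of m b] mid Suc.prems by auto
    then show ?thesis using bs_right[of f' a b eps f out q] 2 \<open>eps > 0\<close> by (auto simp: m_def)
  next
    case 3
    then obtain out q where "bsearch f f' eps a m out q" "\<bar>f' out\<bar> < eps" "q \<le> n"
      using Suc.IH[of a m] mid Suc.prems by auto
    then show ?thesis using bs_left[of f' a b eps f out q] 3 \<open>eps > 0\<close> by (auto simp: m_def)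
  qed
qed

lemma bsearch3_within:
  assumes S: "one_smooth f f'" and "eps > 0" and "a < b" and "f' a \<le> - eps" and "f a \<le> f b"
    and "b - a < 2 ^ n * eps"
  shows "\<exists>out q. bsearch3 f f' eps a b out q \<and> \<bar>f' out\<bar> < eps \<and> q \<le> n"
  using assms(3-)
proof (induction n arbitrary: a b)
  case 0
  then show ?case using one_smooth_descent_length[OF S, of a b eps 0] \<open>eps > 0\<close> by simp
next
  case (Suc n)
  define m where "m = (a + b) / 2"
  note mid = midpoint_halves[OF Suc.prems(1,4), folded m_def]
  consider "\<bar>f' m\<bar> < eps" | "eps \<le> f' m" | "f' m \<le> - eps" "f a \<le> f m"
    | "f' m \<le> - eps" "f m < f a" by linarith
  then show ?case
  proof cases
    case 1
    then show ?thesis using bs3_stop[of f' a b eps f] by (auto simp: m_def)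
  next
    case 2
    then obtain out q where "bsearch f f' eps a m out q" "\<bar>f' out\<bar> < eps" "q \<le> n"
      using bsearch_within[OF S \<open>eps > 0\<close>, of a m n] mid Suc.prems by auto
    then show ?thesis using bs3_pos[of f' a b eps f out q] 2 \<open>eps > 0\<close> by (auto simp: m_def)
  next
    case 3
    then obtain out q where "bsearch3 f f' eps a m out q" "\<bar>f' out\<bar> < eps" "q \<le> n"
      using Suc.IH[of a m] mid Suc.prems by auto
    then show ?thesis using bs3_left[of f' a b eps f out q] 3 \<open>eps > 0\<close> by (auto simp: m_def)
  next
    case 4
    then obtain out q where "bsearch3 f f' eps m b out q" "\<bar>f' out\<bar> < eps" "q \<le> n"
      using Suc.IH[of m b] mid Suc.prems by auto
    then show ?thesis using bs3_right[of f' a b eps f out q] 4 \<open>eps > 0\<close> by (auto simp: m_def)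
  qed
qed

lemma bsearch2_within:
  assumes S: "one_smooth f f'" and "eps > 0" and "a < b" and "f' a \<le> - eps"
    and "0 \<le> f a - f b" and "f a - f b \<le> eps / 4 * (b - a)" and "b - a < 2 ^ n * eps"
  shows "\<exists>out q. bsearch2 f f' eps a b out q \<and> \<bar>f' out\<bar> < eps \<and> q \<le> n"
  using assms(3-)
proof (induction n arbitrary: a b)
  case 0
  then show ?case using one_smooth_descent_length[OF S, of a b eps "eps / 4"] \<open>eps > 0\<close> by simp
next
  case (Suc n)
  define m where "m = (a + b) / 2"
  note mid = midpoint_halves[OF Suc.prems(1,5), folded m_def]
  have half_drop: "(f a - f b) / 2 \<le> eps / 4 * (m - a)" "(f a - f b) / 2 \<le> eps / 4 * (b - m)"
    using Suc.prems(4) by (auto simp: m_def field_simps)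
  consider "\<bar>f' m\<bar> < eps" | "eps \<le> f' m" | "f' m \<le> - eps" "f a \<le> f m"
    | "f' m \<le> - eps" "f m < f a" "f m \<le> f b"
    | "f' m \<le> - eps" "f m < f a" "f b < f m" "f a - f m \<le> (f a - f b) / 2"
    | "f' m \<le> - eps" "f m < f a" "f b < f m" "(f a - f b) / 2 < f a - f m"
    by linarith
  then show ?case
  proof cases
    case 1
    then show ?thesis using bs2_stop[of f' a b eps f] by (auto simp: m_def)
  next
    case 2
    then obtain out q where "bsearch f f' eps a m out q" "\<bar>f' out\<bar> < eps" "q \<le> n"
      using bsearch_within[OF S \<open>eps > 0\<close>, of a m n] mid Suc.prems by auto
    then show ?thesis using bs2_pos[of f' a b eps f out q] 2 \<open>eps > 0\<close> by (auto simp: m_def)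
  next
    case 3
    then obtain out q where "bsearch3 f f' eps a m out q" "\<bar>f' out\<bar> < eps" "q \<le> n"
      using bsearch3_within[OF S \<open>eps > 0\<close>, of a m n] mid Suc.prems by auto
    then show ?thesis using bs2_geq[of f' a b eps f out q] 3 \<open>eps > 0\<close> by (auto simp: m_def)
  next
    case 4
    then obtain out q where "bsearch3 f f' eps m b out q" "\<bar>f' out\<bar> < eps" "q \<le> n"
      using bsearch3_within[OF S \<open>eps > 0\<close>, of m b n] mid Suc.prems by auto
    then show ?thesis using bs2_leq[of f' a b eps f out q] 4 \<open>eps > 0\<close> by (auto simp: m_def)
  next
    case 5
    then obtain out q where "bsearch2 f f' eps a m out q" "\<bar>f' out\<bar> < eps" "q \<le> n"
      using Suc.IH[of a m] mid half_drop Suc.prems by auto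
    then show ?thesis using bs2_left[of f' a b eps f out q] 5 \<open>eps > 0\<close> by (auto simp: m_def)
  next
    case 6
    then obtain out q where "bsearch2 f f' eps m b out q" "\<bar>f' out\<bar> < eps" "q \<le> n"
      using Suc.IH[of m b] mid half_drop Suc.prems by auto
    then show ?thesis using bs2_right[of f' a b eps f out q] 6 \<open>eps > 0\<close> by (auto simp: m_def)
  qed
qed

lemma exists_pow2_gt_le_log:
  fixes x :: real
  assumes "1 \<le> x"
  obtains n :: nat where "x < 2 ^ n" "real n \<le> 1 + log 2 x"
proof
  let ?n = "nat \<lfloor>log 2 x\<rfloor> + 1"
  have n_eq: "real ?n = of_int \<lfloor>log 2 x\<rfloor> + 1"
    using assms by simp
  then have "log 2 x < real ?n" by linarith
  then have "x < 2 powr real ?n"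
    using assms by (simp add: log_less_iff)
  then show "x < 2 ^ ?n" by (simp only: powr_realpow)
  show "real ?n \<le> 1 + log 2 x" using n_eq by linarith
qed

lemma log2_le_const_mul:
  fixes x :: real
  assumes "1 \<le> x"
  shows "1 + log 2 x \<le> (1 + 1 / ln 2) * (1 + max 0 (ln x))"
proof -
  have "0 \<le> ln x" using assms by simp
  then have "ln x / ln 2 \<le> (1 + ln x) / ln 2" by (simp add: divide_right_mono)
  then show ?thesis using \<open>0 \<le> ln x\<close> by (simp add: log_def algebra_simps)
qed

theorem lemmaA6:
  "\<exists>C::real. C > 0 \<and>
    (\<forall>(eps::real) (f::real \<Rightarrow> real) f' (xm::real) xp.
       eps > 0 \<longrightarrow> one_smooth f f' \<longrightarrow> xm < xp \<longrightarrow> f' xm \<le> - eps \<longrightarrow>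
       0 \<le> f xm - f xp \<longrightarrow> f xm - f xp \<le> eps / 4 * (xp - xm) \<longrightarrow>
       (\<exists>out q. bsearch2 f f' eps xm xp out q \<and> \<bar>f' out\<bar> < eps \<and>
          real q \<le> C * (1 + max 0 (ln ((xp - xm) / eps)))))"
proof (rule exI[of _ "1 + 1 / ln 2"], intro conjI allI impI)
  show "0 < 1 + 1 / ln (2::real)" by (simp add: add_pos_pos)
  fix eps xm xp :: real and f f' :: "real \<Rightarrow> real"
  assume eps: "eps > 0" and S: "one_smooth f f'" and h: "xm < xp" "f' xm \<le> - eps"
    "0 \<le> f xm - f xp" "f xm - f xp \<le> eps / 4 * (xp - xm)"
  define x where "x = (xp - xm) / eps"
  have "1 \<le> x"
    using one_smooth_descent_length[OF S h(1,2,4)] eps by (simp add: x_def field_simps)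
  then obtain n where "x < 2 ^ n" and n_le: "real n \<le> 1 + log 2 x"
    by (rule exists_pow2_gt_le_log)
  then have "xp - xm < 2 ^ n * eps" using eps by (simp add: x_def divide_less_eq)
  then obtain out q where "bsearch2 f f' eps xm xp out q" "\<bar>f' out\<bar> < eps" "q \<le> n"
    using bsearch2_within[OF S eps h] by blast
  moreover have "real q \<le> (1 + 1 / ln 2) * (1 + max 0 (ln x))"
    using \<open>q \<le> n\<close> n_le log2_le_const_mul[OF \<open>1 \<le> x\<close>] by linarith
  ultimately show "\<exists>out q. bsearch2 f f' eps xm xp out q \<and> \<bar>f' out\<bar> < eps \<and>
      real q \<le> (1 + 1 / ln 2) * (1 + max 0 (ln ((xp - xm) / eps)))"
    unfolding x_def by blast
qed

end
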